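(* Let $d\ge 2$ and $R \subseteq \{0,1,\dots,d-1\}$ with $0 \in R$. Let $m^\star \in \mathcal{M}^s_d(R)$ be an optimal symmetric $R$-estimator, i.e. $\|m^\star - \textsc{max}\|_\infty = \min_{m\in\mathcal{M}_d^s(R)}\|m-\textsc{max}\|_\infty$. For $0\le\epsilon < \mathrm{err}(R)/2$ let $$W(\epsilon; R) = \{x \in [0,1]^d : |x_{(1)} - m^\star(x)| \ge \epsilon\}.$$ Then $\mathrm{vol}(W(\epsilon; R)) \ge (\mathrm{err}(R)/2 - \epsilon)^d$, where $\mathrm{vol}$ is Lebesgue measure on $[0,1]^d$.
   Context: For $x\in\mathbb{R}^d$ and nonempty $A\subseteq\{1,\dots,d\}$, $s(x;A)=\max\{x_j:j\in A\}$. $C(k,r,d)$ is the $k$-th $r$-element subset of $\{1,\dots,d\}$ in lexicographic order. For $R\subseteq\{0,\dots,d-1\}$, $\mathcal{M}_d(R)$ is the set of functions $x\mapsto \beta_0+\sum_{r\in R\setminus\{0\}}\sum_{j=1}^{\binom dr}\beta_r^j s(x;C(j,r,d))$ with real coefficients, the intercept $\beta_0$ being present iff $0\in R$. $\mathcal{M}_d^s(R)$ is the subset of $\mathcal{M}_d(R)$ of functions invariant under every permutation of their $d$ arguments. $\textsc{max}(x)=\max_i x_i = x_{(1)}$, $\|\cdot\|_\infty$ is the sup norm over $[0,1]^d$, and $\mathrm{err}(R)=\min_{m\in\mathcal{M}_d(R)}\|m-\textsc{max}\|_\infty$. *)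

theory Defs
  imports "HOL-Analysis.Analysis"
begin

text \<open>Points of R^d are vectors x :: real^'n, with d = CARD('n).\<close>

definition unit_cube :: "(real^'n) set" where
  "unit_cube = {x. \<forall>i. 0 \<le> x$i \<and> x$i \<le> 1}"

definition smax :: "real^'n \<Rightarrow> 'n set \<Rightarrow> real" where
  "smax x A = Max ((\<lambda>j. x$j) ` A)"

definition maxf :: "real^'n \<Rightarrow> real" where
  "maxf x = Max (range (\<lambda>i. x$i))"

text \<open>M_d(R): the r-element subsets are indexed directly by the subsets themselves
 (equivalent to enumerating them as C(j,r,d) in lexicographic order).\<close>
definition Mclass :: "nat set \<Rightarrow> (real^'n \<Rightarrow> real) set" where
  "Mclass R = {m. \<exists>(b0::real) (b::'n set \<Rightarrow> real).
      m = (\<lambda>x. (if 0 \<in> R then b0 else 0) +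
              (\<Sum>r\<in>R - {0}. \<Sum>A\<in>{A::'n set. card A = r}. b A * smax x A))}"

definition symmetric_fun :: "(real^'n \<Rightarrow> real) \<Rightarrow> bool" where
  "symmetric_fun m \<longleftrightarrow> (\<forall>p x. p permutes (UNIV::'n set) \<longrightarrow> m (\<chi> i. x $ p i) = m x)"

definition Msym :: "nat set \<Rightarrow> (real^'n \<Rightarrow> real) set" where
  "Msym R = {m \<in> Mclass R. symmetric_fun m}"

definition supnorm :: "(real^'n \<Rightarrow> real) \<Rightarrow> real" where
  "supnorm f = (SUP x\<in>unit_cube. \<bar>f x\<bar>)"

definition err :: "('n::finite) itself \<Rightarrow> nat set \<Rightarrow> real" where
  "err _ R = Inf ((\<lambda>m. supnorm (\<lambda>x. m x - maxf x)) ` (Mclass R :: (real^'n \<Rightarrow> real) set))"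

definition Wset :: "(real^'n \<Rightarrow> real) \<Rightarrow> real \<Rightarrow> (real^'n) set" where
  "Wset mstar eps = {x \<in> unit_cube. \<bar>maxf x - mstar x\<bar> \<ge> eps}"

end

theory Submission
  imports Defs
begin

text \<open>
  Each s(x;A), hence every m in M_d(R) and max itself, is affine on segments between
  comonotone points, since one index of A maximises both endpoints.
  Peeling off the smallest coordinate value in (0,1) writes every point of the cube as a convex
  combination of a comonotone pair with fewer such values, so |m* - max| attains its supremum M
  at a vertex u, and M \<ge> err(R). A point z at sup-distance at most \<delta> from u is
  (1 - 2\<delta>) u + 2\<delta> w with w in the cube and comonotone with u, hence
  |m*(z) - max z| \<ge> (1 - 4\<delta>) M \<ge> \<epsilon> for \<delta> = err(R)/2 - \<epsilon>; these z form
  a cube of volume \<delta>^d.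
\<close>

definition comonotone :: "real^'n \<Rightarrow> real^'n \<Rightarrow> bool" where
  "comonotone p q \<longleftrightarrow>
     (\<forall>i j. p$i < p$j \<longrightarrow> q$i \<le> q$j) \<and> (\<forall>i j. q$i < q$j \<longrightarrow> p$i \<le> p$j)"

definition comonotone_affine :: "(real^'n \<Rightarrow> real) \<Rightarrow> bool" where
  "comonotone_affine F \<longleftrightarrow> (\<forall>p q t. comonotone p q \<longrightarrow> 0 \<le> t \<longrightarrow> t \<le> 1 \<longrightarrow>
     F ((1 - t) *\<^sub>R p + t *\<^sub>R q) = (1 - t) * F p + t * F q)"

lemma comonotone_affineD:
  "comonotone_affine F \<Longrightarrow> comonotone p q \<Longrightarrow> 0 \<le> t \<Longrightarrow> t \<le> 1 \<Longrightarrow>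
     F ((1 - t) *\<^sub>R p + t *\<^sub>R q) = (1 - t) * F p + t * F q"
  unfolding comonotone_affine_def by blast

lemma comonotone_mono_comp:
  fixes g h :: "real \<Rightarrow> real" and x :: "real^'n"
  assumes "mono g" "mono h"
  shows "comonotone (\<chi> i. g (x$i)) (\<chi> i. h (x$i))"
proof -
  have "f (x$i) \<le> f (x$j)" if "mono f" "mono f'" "f' (x$i) < f' (x$j)" for f f' :: "real \<Rightarrow> real" and i j
    using that by (metis monoD not_le nle_le)
  then show ?thesis
    unfolding comonotone_def using assms by simp
qed

lemma comonotone_common_argmax:
  fixes p q :: "real^'n"
  assumes "comonotone p q" "A \<noteq> {}"
  obtains j where "j \<in> A" "\<And>i. i \<in> A \<Longrightarrow> p$i \<le> p$j \<and> q$i \<le> q$j"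
proof -
  obtain j where j: "j \<in> A" "Max ((\<lambda>i. p$i + q$i) ` A) = p$j + q$j"
    using obtains_MAX[of A "\<lambda>i. p$i + q$i"] assms(2) by auto
  have "p$i \<le> p$j \<and> q$i \<le> q$j" if "i \<in> A" for i
  proof -
    have "p$i + q$i \<le> p$j + q$j"
      using that j(2)[symmetric] by simp
    moreover have "p$j < p$i \<Longrightarrow> q$j \<le> q$i" "q$j < q$i \<Longrightarrow> p$j \<le> p$i"
      using assms(1) unfolding comonotone_def by blast+
    ultimately show ?thesis by linarith
  qed
  then show ?thesis using that j(1) by blast
qed

lemma smax_eqI: "j \<in> A \<Longrightarrow> (\<And>i. i \<in> A \<Longrightarrow> x$i \<le> x$j) \<Longrightarrow> smax x A = x$j"
  unfolding smax_def by (intro Max_eqI) auto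

lemma comonotone_affine_smax:
  fixes A :: "'n::finite set"
  assumes "A \<noteq> {}"
  shows "comonotone_affine (\<lambda>x. smax x A)"
  unfolding comonotone_affine_def
proof (intro allI impI)
  fix p q :: "real^'n" and t :: real
  assume "comonotone p q" "0 \<le> t" "t \<le> 1"
  then obtain j where j: "j \<in> A" "\<And>i. i \<in> A \<Longrightarrow> p$i \<le> p$j \<and> q$i \<le> q$j"
    using comonotone_common_argmax assms by blast
  have "(1 - t) * p$i + t * q$i \<le> (1 - t) * p$j + t * q$j" if "i \<in> A" for i
    using j(2)[OF that] \<open>0 \<le> t\<close> \<open>t \<le> 1\<close> by (intro add_mono mult_left_mono) auto
  then have "smax ((1 - t) *\<^sub>R p + t *\<^sub>R q) A = ((1 - t) *\<^sub>R p + t *\<^sub>R q)$j"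
    using j(1) by (intro smax_eqI) simp_all
  moreover have "smax p A = p$j" "smax q A = q$j"
    using j by (auto intro: smax_eqI)
  ultimately show "smax ((1 - t) *\<^sub>R p + t *\<^sub>R q) A = (1 - t) * smax p A + t * smax q A"
    by simp
qed

lemma comonotone_affine_const: "comonotone_affine (\<lambda>x. c)"
  unfolding comonotone_affine_def by (simp add: algebra_simps)

lemma comonotone_affine_add:
  "comonotone_affine F \<Longrightarrow> comonotone_affine G \<Longrightarrow> comonotone_affine (\<lambda>x. F x + G x)"
  unfolding comonotone_affine_def by (simp add: ring_distribs)

lemma comonotone_affine_diff:
  "comonotone_affine F \<Longrightarrow> comonotone_affine G \<Longrightarrow> comonotone_affine (\<lambda>x. F x - G x)"
  unfolding comonotone_affine_def by (simp add: ring_distribs)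

lemma comonotone_affine_scale:
  "comonotone_affine F \<Longrightarrow> comonotone_affine (\<lambda>x. c * F x)"
  unfolding comonotone_affine_def by (simp add: ring_distribs mult.left_commute)

lemma comonotone_affine_sum:
  "(\<And>i. i \<in> I \<Longrightarrow> comonotone_affine (F i)) \<Longrightarrow> comonotone_affine (\<lambda>x. \<Sum>i\<in>I. F i x)"
  unfolding comonotone_affine_def by (simp add: sum.distrib sum_distrib_left)

lemma maxf_eq_smax: "maxf x = smax x UNIV"
  unfolding maxf_def smax_def by simp

lemma comonotone_affine_maxf: "comonotone_affine maxf"
  using comonotone_affine_smax[of UNIV] by (simp add: maxf_eq_smax[abs_def])

lemma comonotone_affine_Mclass:
  fixes m :: "real^'n::finite \<Rightarrow> real"
  assumes "m \<in> Mclass R"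
  shows "comonotone_affine m"
proof -
  obtain b0 b where m: "m = (\<lambda>x. (if 0 \<in> R then b0 else 0) +
      (\<Sum>r\<in>R - {0}. \<Sum>A\<in>{A::'n set. card A = r}. b A * smax x A))"
    using assms unfolding Mclass_def by blast
  show ?thesis
    unfolding m
    by (intro comonotone_affine_add comonotone_affine_const comonotone_affine_sum
        comonotone_affine_scale comonotone_affine_smax) auto
qed

definition cube_vertices :: "(real^'n) set" where
  "cube_vertices = {v. \<forall>i. v$i = 0 \<or> v$i = 1}"

definition interior_values :: "real^'n \<Rightarrow> real set" where
  "interior_values x = range (\<lambda>i. x$i) \<inter> {0<..<1}"

lemma finite_cube_vertices: "finite (cube_vertices :: (real^'n::finite) set)"
proof (rule finite_subset)
  show "cube_vertices \<subseteq> range (\<lambda>S. \<chi> i::'n. if i \<in> S then (1::real) else 0)"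
  proof
    fix v :: "real^'n"
    assume "v \<in> cube_vertices"
    then have "v = (\<chi> i. if i \<in> {i. v$i = 1} then 1 else 0)"
      unfolding cube_vertices_def by (auto simp: vec_eq_iff)
    then show "v \<in> range (\<lambda>S. \<chi> i. if i \<in> S then 1 else 0)" by blast
  qed
qed simp

lemma cube_vertices_subset_unit_cube: "cube_vertices \<subseteq> unit_cube"
proof
  fix v :: "real^'n"
  assume "v \<in> cube_vertices"
  then have v01: "v$i = 0 \<or> v$i = 1" for i
    unfolding cube_vertices_def by blast
  have "0 \<le> v$i \<and> v$i \<le> 1" for i
    using v01[of i] by auto
  then show "v \<in> unit_cube"
    unfolding unit_cube_def by simp
qed

lemma cube_vertexI:
  assumes "x \<in> unit_cube" "interior_values x = {}"
  shows "x \<in> cube_vertices"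
  unfolding cube_vertices_def
proof (intro CollectI allI)
  fix i
  have "x$i \<notin> {0<..<1}"
    using assms(2) unfolding interior_values_def by blast
  moreover have "0 \<le> x$i \<and> x$i \<le> 1"
    using assms(1) unfolding unit_cube_def by simp
  ultimately show "x$i = 0 \<or> x$i = 1" by auto
qed

lemma card_interior_values_peel:
  fixes x :: "real^'n::finite"
  assumes a: "a \<in> interior_values x" and x: "\<forall>i. x$i = 0 \<or> (a \<le> x$i \<and> x$i \<le> 1)"
  shows "card (interior_values (\<chi> i. max 0 ((x$i - a) / (1 - a)))) < card (interior_values x)"
proof -
  define g where "g s = max 0 ((s - a) / (1 - a))" for s
  have fin: "finite (interior_values x)"
    unfolding interior_values_def by simp
  have a01: "0 < a" "a < 1"
    using a unfolding interior_values_def by auto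
  have "interior_values (\<chi> i. g (x$i)) \<subseteq> g ` (interior_values x - {a})"
  proof
    fix c
    assume "c \<in> interior_values (\<chi> i. g (x$i))"
    then obtain i where c: "c = g (x$i)" "0 < g (x$i)" "g (x$i) < 1"
      unfolding interior_values_def by auto
    then have "x$i \<in> interior_values x - {a}"
      using x[rule_format, of i] a01 unfolding interior_values_def g_def by (auto simp: field_simps)
    then show "c \<in> g ` (interior_values x - {a})"
      using c(1) by blast
  qed
  then have "card (interior_values (\<chi> i. g (x$i))) \<le> card (interior_values x - {a})"
    using fin by (meson card_image_le card_mono finite_Diff finite_imageI order_trans)
  also have "\<dots> < card (interior_values x)"
    using fin a by (rule card_Diff1_less)
  finally show ?thesis
    unfolding g_def .
qed

lemma unit_cube_decompose:
  fixes x :: "real^'n::finite"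
  assumes x: "x \<in> unit_cube" and nonvertex: "interior_values x \<noteq> {}"
  obtains y v a where "y \<in> unit_cube" "v \<in> cube_vertices" "comonotone y v" "0 \<le> a" "a \<le> 1"
    "x = (1 - a) *\<^sub>R y + a *\<^sub>R v" "card (interior_values y) < card (interior_values x)"
proof -
  define a where "a = Min (interior_values x)"
  have fin: "finite (interior_values x)"
    unfolding interior_values_def by simp
  have a: "a \<in> interior_values x"
    unfolding a_def using fin nonvertex by (rule Min_in)
  then have a01: "0 < a" "a < 1"
    unfolding interior_values_def by auto
  have x_cases: "x$i = 0 \<or> (a \<le> x$i \<and> x$i \<le> 1)" for i
  proof -
    have "0 < x$i \<Longrightarrow> x$i < 1 \<Longrightarrow> a \<le> x$i"
      unfolding a_def using fin by (simp add: interior_values_def)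
    moreover have "0 \<le> x$i" "x$i \<le> 1"
      using x unfolding unit_cube_def by auto
    ultimately show ?thesis
      using a01 by linarith
  qed
  define g where "g s = max 0 ((s - a) / (1 - a))" for s
  define h where "h s = (if a \<le> s then 1 else 0 :: real)" for s
  define y where "y = (\<chi> i. g (x$i))"
  define v where "v = (\<chi> i. h (x$i))"
  have "mono g"
    unfolding g_def using a01 by (intro monoI max.mono divide_right_mono) auto
  moreover have "mono h"
    unfolding h_def by (intro monoI) auto
  ultimately have yv: "comonotone y v"
    unfolding y_def v_def by (rule comonotone_mono_comp)
  have "0 \<le> g (x$i) \<and> g (x$i) \<le> 1" for i
    using x_cases[of i] a01 unfolding g_def by (auto simp: field_simps)
  then have y: "y \<in> unit_cube"
    unfolding unit_cube_def y_def by simp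
  have v: "v \<in> cube_vertices"
    unfolding cube_vertices_def v_def h_def by simp
  have "x$i = (1 - a) * g (x$i) + a * h (x$i)" for i
    using x_cases[of i] a01 unfolding g_def h_def by (auto simp: field_simps)
  then have x_eq: "x = (1 - a) *\<^sub>R y + a *\<^sub>R v"
    unfolding y_def v_def by (simp add: vec_eq_iff)
  have "card (interior_values y) < card (interior_values x)"
    unfolding y_def g_def using a x_cases by (intro card_interior_values_peel) auto
  with y v yv x_eq a01 show ?thesis
    by (intro that) auto
qed

lemma comonotone_affine_vertex_bound:
  fixes F :: "real^'n::finite \<Rightarrow> real"
  assumes F: "comonotone_affine F" and "x \<in> unit_cube"
  shows "\<exists>u\<in>cube_vertices. \<bar>F x\<bar> \<le> \<bar>F u\<bar>"
  using assms(2)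
proof (induction "card (interior_values x)" arbitrary: x rule: less_induct)
  case less
  show ?case
  proof (cases "interior_values x = {}")
    case True
    then show ?thesis
      using less.prems cube_vertexI by blast
  next
    case False
    then obtain y v a where y: "y \<in> unit_cube" and v: "v \<in> cube_vertices"
      and yv: "comonotone y v" and a: "0 \<le> a" "a \<le> 1"
      and x: "x = (1 - a) *\<^sub>R y + a *\<^sub>R v"
      and smaller: "card (interior_values y) < card (interior_values x)"
      using unit_cube_decompose less.prems by blast
    obtain u where u: "u \<in> cube_vertices" "\<bar>F y\<bar> \<le> \<bar>F u\<bar>"
      using less.hyps[OF smaller y] by blast
    define M where "M = max \<bar>F u\<bar> \<bar>F v\<bar>"
    have "\<bar>F x\<bar> = \<bar>(1 - a) * F y + a * F v\<bar>"
      unfolding x using comonotone_affineD[OF F yv a] by simp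
    also have "\<dots> \<le> (1 - a) * \<bar>F y\<bar> + a * \<bar>F v\<bar>"
      using a by (metis abs_mult abs_of_nonneg abs_triangle_ineq diff_ge_0_iff_ge)
    also have "\<dots> \<le> (1 - a) * M + a * M"
      unfolding M_def using a u(2) by (intro add_mono mult_left_mono) auto
    also have "\<dots> = M"
      by (simp add: algebra_simps)
    finally show ?thesis
      using u(1) v unfolding M_def by (metis max_def)
  qed
qed

lemma comonotone_affine_max_at_vertex:
  fixes F :: "real^'n::finite \<Rightarrow> real"
  assumes F: "comonotone_affine F"
  shows "\<exists>u\<in>cube_vertices. \<forall>x\<in>unit_cube. \<bar>F x\<bar> \<le> \<bar>F u\<bar>"
proof -
  have "0 \<in> cube_vertices"
    unfolding cube_vertices_def by simp
  then obtain u where u: "u \<in> cube_vertices" "Max ((\<lambda>v. \<bar>F v\<bar>) ` cube_vertices) = \<bar>F u\<bar>"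
    using obtains_MAX[OF finite_cube_vertices] by blast
  have "\<bar>F x\<bar> \<le> \<bar>F u\<bar>" if x: "x \<in> unit_cube" for x
  proof -
    obtain v where v: "v \<in> cube_vertices" "\<bar>F x\<bar> \<le> \<bar>F v\<bar>"
      using comonotone_affine_vertex_bound[OF F x] by blast
    have "\<bar>F v\<bar> \<le> Max ((\<lambda>v. \<bar>F v\<bar>) ` cube_vertices)"
      using v(1) by (intro Max_ge) (simp_all add: finite_cube_vertices)
    then show ?thesis
      using v(2) u(2) by linarith
  qed
  then show ?thesis
    using u(1) by blast
qed

lemma supnorm_eq_vertex:
  assumes "u \<in> cube_vertices" "\<forall>x\<in>unit_cube. \<bar>F x\<bar> \<le> \<bar>F u\<bar>"
  shows "supnorm F = \<bar>F u\<bar>"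
  unfolding supnorm_def
  using assms cube_vertices_subset_unit_cube by (intro cSup_eq_maximum) auto

lemma err_le_supnorm:
  fixes m :: "real^'n::finite \<Rightarrow> real"
  assumes "m \<in> Mclass R"
  shows "err TYPE('n) R \<le> supnorm (\<lambda>x. m x - maxf x)"
proof -
  have "0 \<le> supnorm (\<lambda>x. m' x - maxf x)" if "m' \<in> Mclass R" for m' :: "real^'n \<Rightarrow> real"
  proof -
    have "comonotone_affine (\<lambda>x. m' x - maxf x)"
      using that by (intro comonotone_affine_diff comonotone_affine_Mclass comonotone_affine_maxf)
    then obtain u where "u \<in> cube_vertices" "\<forall>x\<in>unit_cube. \<bar>m' x - maxf x\<bar> \<le> \<bar>m' u - maxf u\<bar>"
      using comonotone_affine_max_at_vertex by blast
    then show ?thesis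
      using supnorm_eq_vertex[of u "\<lambda>x. m' x - maxf x"] by simp
  qed
  then have "bdd_below ((\<lambda>m. supnorm (\<lambda>x. m x - maxf x)) ` (Mclass R :: (real^'n \<Rightarrow> real) set))"
    by (intro bdd_belowI[of _ 0]) blast
  then show ?thesis
    unfolding err_def using assms by (rule cINF_lower)
qed

lemma maxf_unit_cube: "x \<in> unit_cube \<Longrightarrow> 0 \<le> maxf x \<and> maxf x \<le> 1"
proof -
  obtain j where "maxf x = x$j"
    unfolding maxf_def using obtains_MAX[of UNIV "\<lambda>i. x$i"] by auto
  moreover assume "x \<in> unit_cube"
  ultimately show ?thesis
    unfolding unit_cube_def by simp
qed

lemma err_le_half:
  assumes "0 \<in> R"
  shows "err TYPE('n::finite) R \<le> 1/2"
proof -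
  have "(\<lambda>x::real^'n. 1/2) \<in> Mclass R"
    unfolding Mclass_def using assms by (intro CollectI exI[of _ "1/2"] exI[of _ "\<lambda>A. 0"]) simp
  then have "err TYPE('n) R \<le> supnorm (\<lambda>x::real^'n. 1/2 - maxf x)"
    by (rule err_le_supnorm)
  also have "\<dots> \<le> 1/2"
    unfolding supnorm_def
  proof (rule cSUP_least)
    have "(0::real^'n) \<in> unit_cube"
      unfolding unit_cube_def by simp
    then show "(unit_cube :: (real^'n) set) \<noteq> {}" by blast
    show "\<bar>1/2 - maxf x\<bar> \<le> 1/2" if "x \<in> unit_cube" for x
      using maxf_unit_cube[OF that] unfolding abs_le_iff by linarith
  qed
  finally show ?thesis .
qed

definition corner_box :: "real^'n \<Rightarrow> real \<Rightarrow> (real^'n) set" where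
  "corner_box u d = {z \<in> unit_cube. \<forall>i. \<bar>z$i - u$i\<bar> \<le> d}"

lemma corner_box_eq_cbox:
  fixes u :: "real^'n::finite"
  assumes u: "u \<in> cube_vertices" and "d \<le> 1"
  shows "corner_box u d = cbox ((1 - d) *\<^sub>R u) ((1 - d) *\<^sub>R u + d *\<^sub>R 1)"
proof -
  have coordinate: "(0 \<le> z$i \<and> z$i \<le> 1) \<and> \<bar>z$i - u$i\<bar> \<le> d \<longleftrightarrow>
      (1 - d) * u$i \<le> z$i \<and> z$i \<le> (1 - d) * u$i + d" for z :: "real^'n" and i
    using u \<open>d \<le> 1\<close> unfolding cube_vertices_def by (cases "u$i = 0") auto
  show ?thesis
  proof (rule set_eqI)
    fix z :: "real^'n"
    have "z \<in> corner_box u d \<longleftrightarrow> (\<forall>i. (0 \<le> z$i \<and> z$i \<le> 1) \<and> \<bar>z$i - u$i\<bar> \<le> d)"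
      unfolding corner_box_def unit_cube_def by auto
    also have "\<dots> \<longleftrightarrow> (\<forall>i. (1 - d) * u$i \<le> z$i \<and> z$i \<le> (1 - d) * u$i + d)"
      using coordinate by blast
    also have "\<dots> \<longleftrightarrow> z \<in> cbox ((1 - d) *\<^sub>R u) ((1 - d) *\<^sub>R u + d *\<^sub>R 1)"
      by (auto simp: mem_box_cart)
    finally show "z \<in> corner_box u d \<longleftrightarrow> z \<in> cbox ((1 - d) *\<^sub>R u) ((1 - d) *\<^sub>R u + d *\<^sub>R 1)" .
  qed
qed

lemma emeasure_corner_box:
  fixes u :: "real^'n::finite"
  assumes "u \<in> cube_vertices" "0 \<le> d" "d \<le> 1"
  shows "emeasure lborel (corner_box u d) = ennreal (d ^ CARD('n))"
proof -
  let ?B = "cbox ((1 - d) *\<^sub>R u) ((1 - d) *\<^sub>R u + d *\<^sub>R 1) :: (real^'n) set"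
  have "?B \<noteq> {}"
    using \<open>0 \<le> d\<close> by (simp add: interval_ne_empty_cart)
  then have "measure lborel ?B = d ^ CARD('n)"
    by (simp add: content_cbox_cart)
  moreover have "emeasure lborel ?B = ennreal (measure lborel ?B)"
    using emeasure_lborel_cbox_finite[of "(1 - d) *\<^sub>R u" "(1 - d) *\<^sub>R u + d *\<^sub>R 1"]
    by (simp add: emeasure_eq_ennreal_measure)
  ultimately show ?thesis
    using corner_box_eq_cbox[OF assms(1,3)] by simp
qed

lemma comonotone_near_vertex:
  assumes u: "u \<in> cube_vertices" and w: "\<And>i. \<bar>w$i - u$i\<bar> \<le> 1/2"
  shows "comonotone u w"
proof -
  have u01: "u$i = 0 \<or> u$i = 1" for i
    using u unfolding cube_vertices_def by blast
  have low: "u$i = 0 \<Longrightarrow> w$i \<le> 1/2" and high: "u$i = 1 \<Longrightarrow> 1/2 \<le> w$i" for i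
    using w[of i] unfolding abs_le_iff by auto
  show ?thesis
    unfolding comonotone_def
  proof (intro conjI allI impI)
    fix i j
    show "w$i \<le> w$j" if "u$i < u$j"
    proof -
      have "u$i = 0" "u$j = 1"
        using that u01[of i] u01[of j] by auto
      then show ?thesis
        using low[of i] high[of j] by linarith
    qed
    show "u$i \<le> u$j" if "w$i < w$j"
    proof (rule ccontr)
      assume "\<not> u$i \<le> u$j"
      then have "u$i = 1" "u$j = 0"
        using u01[of i] u01[of j] by auto
      then show False
        using that high[of i] low[of j] by linarith
    qed
  qed
qed

lemma corner_box_decompose:
  assumes u: "u \<in> cube_vertices" and "0 < d" and z: "z \<in> corner_box u d"
  obtains w where "w \<in> unit_cube" "\<And>i. \<bar>w$i - u$i\<bar> \<le> 1/2"
    "z = (1 - 2*d) *\<^sub>R u + (2*d) *\<^sub>R w"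
proof -
  define w where "w = u + (1 / (2*d)) *\<^sub>R (z - u)"
  have wu: "w$i - u$i = (z$i - u$i) / (2*d)" for i
    unfolding w_def by simp
  have z01: "0 \<le> z$i" "z$i \<le> 1" and zu: "\<bar>z$i - u$i\<bar> \<le> d" for i
    using z unfolding corner_box_def unit_cube_def by auto
  have near: "\<bar>w$i - u$i\<bar> \<le> 1/2" for i
    unfolding wu using zu[of i] \<open>0 < d\<close> by (simp add: abs_divide field_simps)
  have "0 \<le> w$i \<and> w$i \<le> 1" for i
  proof -
    have "u$i = 0 \<or> u$i = 1"
      using u unfolding cube_vertices_def by blast
    moreover have "u$i = 0 \<Longrightarrow> 0 \<le> w$i - u$i" "u$i = 1 \<Longrightarrow> w$i - u$i \<le> 0"
      unfolding wu using z01[of i] \<open>0 < d\<close> by (simp_all add: divide_nonpos_pos)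
    ultimately show ?thesis
      using near[of i] unfolding abs_le_iff by auto
  qed
  then have "w \<in> unit_cube"
    unfolding unit_cube_def by simp
  moreover have "z = (1 - 2*d) *\<^sub>R u + (2*d) *\<^sub>R w"
    unfolding w_def using \<open>0 < d\<close> by (simp add: vec_eq_iff algebra_simps)
  ultimately show ?thesis
    using that near by blast
qed

lemma comonotone_affine_corner_bound:
  fixes F :: "real^'n::finite \<Rightarrow> real"
  assumes F: "comonotone_affine F" and u: "u \<in> cube_vertices"
    and u_max: "\<forall>x\<in>unit_cube. \<bar>F x\<bar> \<le> \<bar>F u\<bar>"
    and d: "0 < d" "d \<le> 1/2" and z: "z \<in> corner_box u d"
  shows "(1 - 4*d) * \<bar>F u\<bar> \<le> \<bar>F z\<bar>"
proof -
  obtain w where w: "w \<in> unit_cube" "\<And>i. \<bar>w$i - u$i\<bar> \<le> 1/2"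
    and z_eq: "z = (1 - 2*d) *\<^sub>R u + (2*d) *\<^sub>R w"
    using corner_box_decompose[OF u d(1) z] by blast
  have Fz: "F z = (1 - 2*d) * F u + (2*d) * F w"
    unfolding z_eq using comonotone_affineD[OF F comonotone_near_vertex[OF u w(2)], of "2*d"] d
    by simp
  have "(1 - 2*d) * \<bar>F u\<bar> = \<bar>F z - (2*d) * F w\<bar>"
    unfolding Fz using d by (simp add: abs_mult)
  also have "\<dots> \<le> \<bar>F z\<bar> + (2*d) * \<bar>F w\<bar>"
    using abs_triangle_ineq4[of "F z" "(2*d) * F w"] d by (simp add: abs_mult)
  also have "\<dots> \<le> \<bar>F z\<bar> + (2*d) * \<bar>F u\<bar>"
    using u_max w(1) d by (simp add: mult_left_mono)
  finally show ?thesis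
    by (simp add: algebra_simps)
qed

lemma unit_cube_eq_cbox: "unit_cube = cbox 0 (1 :: real^'n::finite)"
  unfolding unit_cube_def by (auto simp: mem_box_cart)

lemma smax_borel_measurable [measurable]: "(\<lambda>x::real^'n::finite. smax x A) \<in> borel_measurable borel"
  unfolding smax_def
  by (intro borel_measurable_Max borel_measurable_continuous_onI
      linear_continuous_on bounded_linear_vec_nth) auto

lemma maxf_borel_measurable [measurable]: "maxf \<in> borel_measurable borel"
  unfolding maxf_eq_smax[abs_def] by simp

lemma Wset_sets_lborel:
  fixes m :: "real^'n::finite \<Rightarrow> real"
  assumes "m \<in> Mclass R"
  shows "Wset m eps \<in> sets lborel"
proof -
  obtain b0 b where m: "m = (\<lambda>x. (if 0 \<in> R then b0 else 0) +
      (\<Sum>r\<in>R - {0}. \<Sum>A\<in>{A::'n set. card A = r}. b A * smax x A))"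
    using assms unfolding Mclass_def by blast
  have [measurable]: "unit_cube \<in> sets (borel :: (real^'n) measure)"
    unfolding unit_cube_eq_cbox by simp
  have "Wset m eps = {x \<in> space borel. x \<in> unit_cube \<and> eps \<le> \<bar>maxf x - m x\<bar>}"
    unfolding Wset_def by auto
  also have "\<dots> \<in> sets borel"
    unfolding m by measurable
  finally show ?thesis
    by simp
qed

theorem lemma4:
  fixes R :: "nat set" and mstar :: "real^'n \<Rightarrow> real" and eps :: real
  assumes "CARD('n) \<ge> 2"
    and "R \<subseteq> {..<CARD('n)}" and "0 \<in> R"
    and "mstar \<in> Msym R"
    and "supnorm (\<lambda>x. mstar x - maxf x)
           = Inf ((\<lambda>m. supnorm (\<lambda>x. m x - maxf x)) ` (Msym R :: (real^'n \<Rightarrow> real) set))"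
    and "0 \<le> eps" and "eps < err TYPE('n) R / 2"
  shows "emeasure lborel (Wset mstar eps) \<ge> ennreal ((err TYPE('n) R / 2 - eps) ^ CARD('n))"
proof -
  define e where "e = err TYPE('n) R"
  define d where "d = e / 2 - eps"
  define f where "f = (\<lambda>x. mstar x - maxf x)"
  have mstar: "mstar \<in> Mclass R"
    using assms(4) unfolding Msym_def by simp
  then have f: "comonotone_affine f"
    unfolding f_def by (intro comonotone_affine_diff comonotone_affine_Mclass comonotone_affine_maxf)
  then obtain u where u: "u \<in> cube_vertices" and u_max: "\<forall>x\<in>unit_cube. \<bar>f x\<bar> \<le> \<bar>f u\<bar>"
    using comonotone_affine_max_at_vertex by blast
  have "e \<le> \<bar>f u\<bar>"
    using err_le_supnorm[OF mstar] supnorm_eq_vertex[OF u u_max] unfolding e_def f_def by simp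
  moreover have "e \<le> 1/2"
    unfolding e_def using assms(3) by (rule err_le_half)
  ultimately have d: "0 < d" "d \<le> 1/4" and "(1 - 4*d) * e \<le> (1 - 4*d) * \<bar>f u\<bar>"
    using assms(6,7) unfolding d_def e_def by (auto intro: mult_left_mono)
  moreover have "(1 - 4*d) * e = 2 * eps + (e - 2*eps) * (1 - 2*e)"
    unfolding d_def by (simp add: algebra_simps)
  moreover have "0 \<le> (e - 2*eps) * (1 - 2*e)"
    using assms(7) \<open>e \<le> 1/2\<close> unfolding e_def by simp
  ultimately have "eps \<le> (1 - 4*d) * \<bar>f u\<bar>"
    using assms(6) by linarith
  then have "corner_box u d \<subseteq> Wset mstar eps"
    using comonotone_affine_corner_bound[OF f u u_max] d
    unfolding corner_box_def Wset_def f_def by (force simp: abs_minus_commute)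
  then have "emeasure lborel (corner_box u d) \<le> emeasure lborel (Wset mstar eps)"
    using Wset_sets_lborel[OF mstar] by (rule emeasure_mono)
  then show ?thesis
    using emeasure_corner_box[OF u] d unfolding d_def e_def by simp
qed

end
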